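(* For positive scores $0<s_1\le s_2\le\dots\le s_n$ and integer budget $B\ge1$, the output $\mathbf h=\mathrm{RAS}(s_1,\dots,s_n;B)$ belongs to $\mathcal A$ and satisfies $\mathbf h\in\arg\min_{\mathbf a\in\mathcal A}\|\mathbf a\odot\mathbf s\|_\infty$.
   Context: $\mathcal A=\{\mathbf a\in\mathbb N^n:\|\mathbf a\|_1=B\}$ ($\mathbb N$ includes $0$); $\odot$ is the entrywise product and $\mathbf e_i$ the $i$-th unit vector. RAS$(s_1,\dots,s_n;B)$ with sorted scores $s_1\le\dots\le s_n$: if $B=1$ return $\mathbf e_1$. Otherwise let $\mathbf a=\mathrm{RAS}(s_1,\dots,s_n;B-1)$; let $r=\min\{i:a_i=0\}$ if $a_n=0$, else $r=n$; let $M=\arg\min_{i\in[r]}\|(\mathbf a+\mathbf e_i)\odot\mathbf s\|_\infty$; choose any $j\in M$ minimizing the cardinality of $\arg\max_{i\in[r]}(a_i+e_{j,i})s_i$; return $\mathbf a+\mathbf e_j$. *)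

theory Defs
  imports Complex_Main
begin

text \<open>Vectors in N^n / R^n are functions on nat; only indices 1..n are used.\<close>

definition unit_vec :: "nat \<Rightarrow> nat \<Rightarrow> nat" where
  "unit_vec j = (\<lambda>i. if i = j then 1 else 0)"

definition emul :: "(nat \<Rightarrow> nat) \<Rightarrow> (nat \<Rightarrow> real) \<Rightarrow> nat \<Rightarrow> real" where
  "emul a s = (\<lambda>i. real (a i) * s i)"

definition linf :: "nat \<Rightarrow> (nat \<Rightarrow> real) \<Rightarrow> real" where
  "linf n x = Max ((\<lambda>i. \<bar>x i\<bar>) ` {1..n})"

definition Aset :: "nat \<Rightarrow> nat \<Rightarrow> (nat \<Rightarrow> nat) set" where
  "Aset n B = {a. (\<forall>i. i \<notin> {1..n} \<longrightarrow> a i = 0) \<and> (\<Sum>i\<in>{1..n}. a i) = B}"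

definition ras_r :: "nat \<Rightarrow> (nat \<Rightarrow> nat) \<Rightarrow> nat" where
  "ras_r n a = (if a n = 0 then (LEAST i. 1 \<le> i \<and> a i = 0) else n)"

definition ras_M :: "(nat \<Rightarrow> real) \<Rightarrow> nat \<Rightarrow> (nat \<Rightarrow> nat) \<Rightarrow> nat set" where
  "ras_M s n a = {j \<in> {1..ras_r n a}. \<forall>k \<in> {1..ras_r n a}.
      linf n (emul (\<lambda>i. a i + unit_vec j i) s) \<le> linf n (emul (\<lambda>i. a i + unit_vec k i) s)}"

definition ras_cnt :: "(nat \<Rightarrow> real) \<Rightarrow> nat \<Rightarrow> (nat \<Rightarrow> nat) \<Rightarrow> nat \<Rightarrow> nat" where
  "ras_cnt s n a j = card {i \<in> {1..ras_r n a}.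
      \<forall>i' \<in> {1..ras_r n a}. real (a i' + unit_vec j i') * s i' \<le> real (a i + unit_vec j i) * s i}"

text \<open>RAS is nondeterministic (any j may be chosen among the tie-breakers), so it is
  modelled as the relation "h is a possible output of RAS(s_1..s_n; B)".\<close>
inductive RAS :: "(nat \<Rightarrow> real) \<Rightarrow> nat \<Rightarrow> nat \<Rightarrow> (nat \<Rightarrow> nat) \<Rightarrow> bool"
  for s :: "nat \<Rightarrow> real" and n :: nat where
  base: "RAS s n 1 (unit_vec 1)"
| step: "\<lbrakk> RAS s n B a; j \<in> ras_M s n a; \<forall>k \<in> ras_M s n a. ras_cnt s n a j \<le> ras_cnt s n a k \<rbrakk>
         \<Longrightarrow> RAS s n (Suc B) (\<lambda>i. a i + unit_vec j i)"

end

theory Submission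
  imports Defs
begin

text \<open>Given an
  optimal a for budget B and any b with budget B + 1, some coordinate i has b i > a i.
  Removing one unit from b at i gives an allocation of budget B, so
  linf(b \<odot> s) \<ge> linf(a \<odot> s), and moreover linf(b \<odot> s) \<ge> (a i + 1) s i. Hence
  a + e_i is no worse than b. If i lies outside the candidate range [r], then r < n and
  a r = 0, and since the scores are sorted, a + e_r is no worse than b either. The
  greedy choice j minimises over [r], so a + e_j is no worse than b.\<close>

definition optimal_alloc :: "nat \<Rightarrow> (nat \<Rightarrow> real) \<Rightarrow> nat \<Rightarrow> (nat \<Rightarrow> nat) \<Rightarrow> bool" where
  "optimal_alloc n s B a \<longleftrightarrow>
     a \<in> Aset n B \<and> (\<forall>b \<in> Aset n B. linf n (emul a s) \<le> linf n (emul b s))"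

lemma abs_le_linf: "k \<in> {1..n} \<Longrightarrow> \<bar>x k\<bar> \<le> linf n x"
  unfolding linf_def by (rule Max_ge) auto

lemma linf_leI: "n \<ge> 1 \<Longrightarrow> (\<And>k. k \<in> {1..n} \<Longrightarrow> \<bar>x k\<bar> \<le> c) \<Longrightarrow> linf n x \<le> c"
  unfolding linf_def by (subst Max_le_iff) auto

lemma linf_mono:
  assumes "\<And>k. k \<in> {1..n} \<Longrightarrow> \<bar>x k\<bar> \<le> \<bar>y k\<bar>"
  shows "linf n x \<le> linf n y"
proof (cases "n = 0")
  case True
  then show ?thesis by (simp add: linf_def)
next
  case False
  then show ?thesis
    using assms abs_le_linf[of _ n y] by (intro linf_leI) (auto intro: order_trans)
qed

lemma linf_emul_add_unit_vec_le:
  assumes "n \<ge> 1" and "0 \<le> s m"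
    and "linf n (emul a s) \<le> c" and "(real (a m) + 1) * s m \<le> c"
  shows "linf n (emul (\<lambda>i. a i + unit_vec m i) s) \<le> c"
proof (rule linf_leI[OF \<open>n \<ge> 1\<close>])
  fix k assume k: "k \<in> {1..n}"
  show "\<bar>emul (\<lambda>i. a i + unit_vec m i) s k\<bar> \<le> c"
  proof (cases "k = m")
    case True
    then show ?thesis using assms by (simp add: emul_def unit_vec_def add.commute)
  next
    case False
    then show ?thesis
      using abs_le_linf[OF k, of "emul a s"] assms(3) by (simp add: emul_def unit_vec_def)
  qed
qed

lemma sum_unit_vec: "j \<in> {1..n} \<Longrightarrow> (\<Sum>k\<in>{1..n}. unit_vec j k) = 1"
  unfolding unit_vec_def by (simp add: sum.delta')

lemma zero_in_Aset: "(\<lambda>_. 0) \<in> Aset n 0"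
  by (simp add: Aset_def)

lemma add_unit_vec_in_Aset_iff:
  assumes "j \<in> {1..n}"
  shows "(\<lambda>i. a i + unit_vec j i) \<in> Aset n (Suc B) \<longleftrightarrow> a \<in> Aset n B"
proof -
  have "(\<Sum>i\<in>{1..n}. a i + unit_vec j i) = (\<Sum>i\<in>{1..n}. a i) + 1"
    using sum_unit_vec[OF assms] by (simp add: sum.distrib)
  moreover have "(\<forall>i. i \<notin> {1..n} \<longrightarrow> a i + unit_vec j i = 0) \<longleftrightarrow> (\<forall>i. i \<notin> {1..n} \<longrightarrow> a i = 0)"
    using assms by (auto simp: unit_vec_def)
  ultimately show ?thesis by (simp add: Aset_def)
qed

lemma Aset_Suc_exceeds:
  assumes "a \<in> Aset n B" and "b \<in> Aset n (Suc B)"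
  shows "\<exists>i \<in> {1..n}. a i < b i"
proof (rule ccontr)
  assume "\<not> ?thesis"
  then have "(\<Sum>i\<in>{1..n}. b i) \<le> (\<Sum>i\<in>{1..n}. a i)"
    by (intro sum_mono) (simp add: not_less)
  with assms show False by (simp add: Aset_def)
qed

lemma Aset_Suc_remove_unit:
  assumes "b \<in> Aset n (Suc B)" and "i \<in> {1..n}" and "0 < b i"
  shows "b(i := b i - 1) \<in> Aset n B"
proof -
  have "b = (\<lambda>k. (b(i := b i - 1)) k + unit_vec i k)"
    using assms(3) by (auto simp: unit_vec_def)
  with assms(1) show ?thesis using add_unit_vec_in_Aset_iff[OF assms(2)] by metis
qed

lemma ras_r_range:
  assumes "n \<ge> 1"
  shows "ras_r n a \<in> {1..n}" and "ras_r n a = n \<or> a (ras_r n a) = 0"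
proof -
  let ?P = "\<lambda>i. 1 \<le> i \<and> a i = 0"
  have "ras_r n a \<in> {1..n} \<and> (ras_r n a = n \<or> a (ras_r n a) = 0)"
  proof (cases "a n = 0")
    case True
    then have "?P n" using assms by simp
    then show ?thesis
      using LeastI[of ?P n] Least_le[of ?P n] True by (simp add: ras_r_def)
  next
    case False
    then show ?thesis using assms by (simp add: ras_r_def)
  qed
  then show "ras_r n a \<in> {1..n}" and "ras_r n a = n \<or> a (ras_r n a) = 0" by auto
qed

lemma optimal_alloc_add_unit_vec:
  assumes n: "n \<ge> 1"
    and pos: "\<forall>i \<in> {1..n}. 0 < s i"
    and sorted: "\<forall>i j. 1 \<le> i \<longrightarrow> i \<le> j \<longrightarrow> j \<le> n \<longrightarrow> s i \<le> s j"
    and opt: "optimal_alloc n s B a"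
    and r: "r \<in> {1..n}" "r = n \<or> a r = 0"
    and j: "j \<in> {1..r}"
    and j_min: "\<forall>k \<in> {1..r}. linf n (emul (\<lambda>i. a i + unit_vec j i) s)
                               \<le> linf n (emul (\<lambda>i. a i + unit_vec k i) s)"
  shows "optimal_alloc n s (Suc B) (\<lambda>i. a i + unit_vec j i)"
proof -
  have a: "a \<in> Aset n B" using opt by (simp add: optimal_alloc_def)
  have "linf n (emul (\<lambda>i. a i + unit_vec j i) s) \<le> linf n (emul b s)"
    if b: "b \<in> Aset n (Suc B)" for b
  proof -
    obtain i where i: "i \<in> {1..n}" "a i < b i" using Aset_Suc_exceeds[OF a b] by blast
    have "b(i := b i - 1) \<in> Aset n B" using Aset_Suc_remove_unit[OF b i(1)] i(2) by simp
    moreover have "linf n (emul (b(i := b i - 1)) s) \<le> linf n (emul b s)"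
      using pos by (intro linf_mono) (auto simp: emul_def abs_mult intro: mult_right_mono)
    ultimately have a_le_b: "linf n (emul a s) \<le> linf n (emul b s)"
      using opt by (auto simp: optimal_alloc_def intro: order_trans)
    have si: "0 < s i" using pos i(1) by blast
    have bi: "real (b i) * s i \<le> linf n (emul b s)"
      using abs_le_linf[OF i(1), of "emul b s"] si by (simp add: emul_def)
    obtain m where m: "m \<in> {1..r}" "(real (a m) + 1) * s m \<le> linf n (emul b s)"
    proof (cases "i \<le> r")
      case True
      have "(real (a i) + 1) * s i \<le> real (b i) * s i"
        using i(2) si by (intro mult_right_mono) auto
      then show ?thesis using that[of i] True i(1) bi by auto
    next
      case False
      then have "a r = 0" using r i(1) by auto
      moreover have "s r \<le> s i" using sorted r(1) i(1) False by auto
      moreover have "s i \<le> real (b i) * s i"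
        using i(2) si mult_right_mono[of 1 "real (b i)" "s i"] by auto
      ultimately show ?thesis using that[of r] r(1) bi by auto
    qed
    have "m \<in> {1..n}" using m(1) r(1) by auto
    then have "0 < s m" using pos by blast
    then have "linf n (emul (\<lambda>i. a i + unit_vec m i) s) \<le> linf n (emul b s)"
      using m(2) a_le_b by (intro linf_emul_add_unit_vec_le[OF n]) auto
    then show ?thesis using j_min m(1) by (meson order_trans)
  qed
  moreover have "(\<lambda>i. a i + unit_vec j i) \<in> Aset n (Suc B)"
    using a j r(1) add_unit_vec_in_Aset_iff[of j n] by auto
  ultimately show ?thesis by (simp add: optimal_alloc_def)
qed

theorem lemmaC2:
  fixes s :: "nat \<Rightarrow> real" and n B :: nat and h :: "nat \<Rightarrow> nat"
  assumes "n \<ge> 1"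
    and "\<forall>i \<in> {1..n}. 0 < s i"
    and "\<forall>i j. 1 \<le> i \<longrightarrow> i \<le> j \<longrightarrow> j \<le> n \<longrightarrow> s i \<le> s j"
    and "B \<ge> 1"
    and "RAS s n B h"
  shows "h \<in> Aset n B \<and> (\<forall>a \<in> Aset n B. linf n (emul h s) \<le> linf n (emul a s))"
proof -
  have "optimal_alloc n s B h"
    using assms(5)
  proof (induction rule: RAS.induct)
    case base
    text \<open>The first step is the greedy step from the empty allocation, with r = 1.\<close>
    have "optimal_alloc n s 0 (\<lambda>_. 0)"
      using zero_in_Aset by (auto simp: optimal_alloc_def emul_def intro!: linf_mono)
    then have "optimal_alloc n s (Suc 0) (\<lambda>i. 0 + unit_vec 1 i)"
      using assms(1-3) by (intro optimal_alloc_add_unit_vec[where r = 1]) auto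
    then show ?case by simp
  next
    case (step B a j)
    then show ?case
      using assms(1-3) ras_r_range[OF assms(1), of a]
      by (intro optimal_alloc_add_unit_vec[where r = "ras_r n a"]) (auto simp: ras_M_def)
  qed
  then show ?thesis by (simp add: optimal_alloc_def)
qed

end
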